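(* Let $N$ be an odd positive integer, let $p$ be the smallest prime factor of $N$, and let $K\ge N$ be a positive integer. Let $a_2,a_1\in\mathbb{Z}_N$ with $\gcd(a_2,N)=1$, and let $g:\mathbb{Z}_N\to\mathbb{Z}_N$, $g(x)=a_2x^2+a_1x$. Let $\phi:\mathbb{Z}_N\to\mathbb{Z}_K$ send the residue class of $x\in\{0,1,\dots,N-1\}$ to the residue class of the same integer $x$ modulo $K$, and let $f=\phi\circ g:\mathbb{Z}_N\to\mathbb{Z}_K$. For integers $a,b$ consider the equation $f(x+a)-f(x)=b$ in the unknown $x\in\mathbb{Z}_N$, where $x+a$ is computed in $\mathbb{Z}_N$ and the equation is read in $\mathbb{Z}_K$. Then: (1) if $K=N$, for every integer $a$ with $-p<a<p$, $a\neq 0$, and every integer $b$ with $-N<b<N$, the equation has at most one solution $x\in\mathbb{Z}_N$; (2) if $N<K<2N-1$, for every integer $a$ with $-p<a<p$, $a\ne 0$, and every integer $b$ with $-K+N-1<b<K-N+1$, the equation has at most one solution $x\in\mathbb{Z}_N$; (3) if $K\ge 2N-1$, for every integer $a$ with $-p<a<p$, $a\neq 0$, and every integer $b$ with $-K<b<K$, the equation has at most one solution $x\in\mathbb{Z}_N$.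
   Context: $\mathbb{Z}_N$ denotes the ring of integers modulo $N$. *)

theory Defs
  imports "HOL-Computational_Algebra.Primes"
begin

text \<open>Elements of Z_N are represented by their canonical integer representatives in
  {0..<N}; the map g : Z_N -> Z_N, g(x) = a2 x^2 + a1 x.\<close>
definition qg :: "int \<Rightarrow> int \<Rightarrow> int \<Rightarrow> int \<Rightarrow> int" where
  "qg N a2 a1 x = (a2 * x^2 + a1 * x) mod N"

definition qf :: "int \<Rightarrow> int \<Rightarrow> int \<Rightarrow> int \<Rightarrow> int \<Rightarrow> int" where
  "qf N K a2 a1 x = (qg N a2 a1 x) mod K"

definition sols :: "int \<Rightarrow> int \<Rightarrow> int \<Rightarrow> int \<Rightarrow> int \<Rightarrow> int \<Rightarrow> int set" where
  "sols N K a2 a1 a b = {x \<in> {0..<N}.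
     (qf N K a2 a1 ((x + a) mod N) - qf N K a2 a1 x) mod K = b mod K}"

end

theory Submission
  imports Defs "HOL-Number_Theory.Cong"
begin

text \<open>Since K \<ge> N, phi is the identity on representatives, so
  d(x) = f(x + a) - f(x) is an integer in (-N, N), congruent to 2 a a2 x + a2 a^2 + a1 a
  mod N. As N is odd and 0 < |a| < p, the coefficient 2 a a2 is a unit mod N, so x is
  determined by the residue of d(x) mod N. Under each of the three bounds on b, two values
  of d that are both congruent to b mod K are congruent mod N: for K = N this is
  immediate; for |b| \<le> K - N both values equal b, since |d - b| < K; for
  K \<ge> 2N - 1 they coincide, since their difference is less than K in absolute value.\<close>

lemma qf_eq_qg:
  assumes "0 < N" "N \<le> K"
  shows "qf N K a2 a1 x = qg N a2 a1 x"
  using assms unfolding qf_def qg_def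
  by (intro mod_pos_pos_trivial) (simp, meson order_less_le_trans pos_mod_bound)

lemma abs_qg_diff_less:
  assumes "0 < N"
  shows "\<bar>qg N a2 a1 y - qg N a2 a1 x\<bar> < N"
proof -
  have "0 \<le> qg N a2 a1 z" "qg N a2 a1 z < N" for z
    using assms by (simp_all add: qg_def)
  from this[of x] this[of y] show ?thesis
    by linarith
qed

lemma qg_shift_diff_cong:
  "[qg N a2 a1 ((x + a) mod N) - qg N a2 a1 x = 2*a*a2*x + (a2*a^2 + a1*a)] (mod N)"
proof -
  have "[qg N a2 a1 z = a2*z^2 + a1*z] (mod N)" for z
    by (simp add: qg_def cong_def)
  moreover have "[a2*((x + a) mod N)^2 + a1*((x + a) mod N) = a2*(x + a)^2 + a1*(x + a)] (mod N)"
    by (intro cong_add cong_mult cong_pow cong_refl) (simp_all add: cong_def)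
  ultimately have "[qg N a2 a1 ((x + a) mod N) - qg N a2 a1 x
      = (a2*(x + a)^2 + a1*(x + a)) - (a2*x^2 + a1*x)] (mod N)"
    by (meson cong_diff cong_trans)
  also have "(a2*(x + a)^2 + a1*(x + a)) - (a2*x^2 + a1*x) = 2*a*a2*x + (a2*a^2 + a1*a)"
    by (simp add: power2_eq_square algebra_simps)
  finally show ?thesis .
qed

lemma qg_shift_diff_inj:
  assumes "coprime (2*a*a2) N" "x \<in> {0..<N}" "y \<in> {0..<N}"
    and "[qg N a2 a1 ((x + a) mod N) - qg N a2 a1 x
        = qg N a2 a1 ((y + a) mod N) - qg N a2 a1 y] (mod N)"
  shows "x = y"
proof -
  have "[2*a*a2*x + (a2*a^2 + a1*a) = 2*a*a2*y + (a2*a^2 + a1*a)] (mod N)"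
    using qg_shift_diff_cong[of N a2 a1 x a] qg_shift_diff_cong[of N a2 a1 y a] assms(4)
    by (meson cong_sym cong_trans)
  then have "[2*a*a2*x = 2*a*a2*y] (mod N)"
    by (simp add: cong_add_rcancel)
  then have "[x = y] (mod N)"
    using assms(1) cong_mult_lcancel by blast
  then show ?thesis
    using assms(2,3) by (simp add: cong_def mod_pos_pos_trivial)
qed

lemma coprime_if_abs_less_prime_factors:
  fixes n p a :: int
  assumes "\<And>q. prime q \<Longrightarrow> q dvd n \<Longrightarrow> p \<le> q" "a \<noteq> 0" "\<bar>a\<bar> < p"
  shows "coprime a n"
proof (rule ccontr)
  assume "\<not> coprime a n"
  then have "\<not> is_unit (gcd a n)" "gcd a n \<noteq> 0"
    using assms(2) by (simp_all add: coprime_iff_gcd_eq_1)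
  then obtain q where q: "prime q" "q dvd gcd a n"
    using prime_divisor_exists by blast
  then have "p \<le> q"
    using assms(1) by simp
  moreover have "\<bar>q\<bar> \<le> \<bar>a\<bar>"
    using q(2) assms(2) by (simp add: dvd_imp_le_int)
  ultimately show False
    using assms(3) by linarith
qed

lemma cong_eq_if_abs_diff_less:
  fixes u v K :: int
  assumes "[u = v] (mod K)" "\<bar>u - v\<bar> < K"
  shows "u = v"
proof (rule ccontr)
  assume "u \<noteq> v"
  moreover have "K dvd u - v"
    using assms(1) by (simp add: cong_iff_dvd_diff)
  ultimately have "\<bar>K\<bar> \<le> \<bar>u - v\<bar>"
    by (simp add: dvd_imp_le_int)
  with assms(2) show False
    by linarith
qed

definition residue_determines :: "int \<Rightarrow> int \<Rightarrow> int \<Rightarrow> bool" where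
  "residue_determines N K b \<longleftrightarrow>
     (\<forall>u v. \<bar>u\<bar> < N \<longrightarrow> \<bar>v\<bar> < N \<longrightarrow> [u = b] (mod K) \<longrightarrow> [v = b] (mod K) \<longrightarrow> [u = v] (mod N))"

lemma residue_determines_same_modulus: "residue_determines N N b"
  unfolding residue_determines_def by (meson cong_sym cong_trans)

lemma residue_determines_small:
  assumes "\<bar>b\<bar> \<le> K - N"
  shows "residue_determines N K b"
  unfolding residue_determines_def
proof (intro allI impI)
  fix u v assume "\<bar>u\<bar> < N" "\<bar>v\<bar> < N" "[u = b] (mod K)" "[v = b] (mod K)"
  with assms have "u = b" "v = b"
    by (auto intro!: cong_eq_if_abs_diff_less)
  then show "[u = v] (mod N)"
    by simp
qed

lemma residue_determines_large_modulus:
  assumes "2*N - 1 \<le> K"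
  shows "residue_determines N K b"
  unfolding residue_determines_def
proof (intro allI impI)
  fix u v assume "\<bar>u\<bar> < N" "\<bar>v\<bar> < N" "[u = b] (mod K)" "[v = b] (mod K)"
  then have "[u = v] (mod K)"
    by (meson cong_sym cong_trans)
  with assms \<open>\<bar>u\<bar> < N\<close> \<open>\<bar>v\<bar> < N\<close> have "u = v"
    by (intro cong_eq_if_abs_diff_less) auto
  then show "[u = v] (mod N)"
    by simp
qed

lemma card_sols_le_1:
  assumes "0 < N" "N \<le> K" "coprime (2*a*a2) N" "residue_determines N K b"
  shows "card (sols N K a2 a1 a b) \<le> 1"
proof -
  let ?d = "\<lambda>x. qg N a2 a1 ((x + a) mod N) - qg N a2 a1 x"
  have sols_eq: "sols N K a2 a1 a b = {x \<in> {0..<N}. [?d x = b] (mod K)}"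
    using assms(1,2) by (simp add: sols_def qf_eq_qg cong_def)
  have "x = y" if "x \<in> sols N K a2 a1 a b" "y \<in> sols N K a2 a1 a b" for x y
  proof (rule qg_shift_diff_inj[OF assms(3)])
    show "x \<in> {0..<N}" "y \<in> {0..<N}" "[?d x = ?d y] (mod N)"
      using that assms(4) abs_qg_diff_less[OF assms(1)]
      by (auto simp: sols_eq residue_determines_def)
  qed
  moreover have "finite (sols N K a2 a1 a b)"
    unfolding sols_def by (rule finite_subset[of _ "{0..<N}"]) auto
  ultimately show ?thesis
    by (simp add: card_le_Suc0_iff_eq)
qed

theorem lemma3:
  fixes N K p a2 a1 :: int
  assumes "N > 0" and "odd N"
    and "prime p" and "p dvd N" and "\<And>q. prime q \<Longrightarrow> q dvd N \<Longrightarrow> p \<le> q"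
    and "K \<ge> N"
    and "a2 \<in> {0..<N}" and "a1 \<in> {0..<N}" and "gcd a2 N = 1"
  shows "(K = N \<longrightarrow> (\<forall>a b. -p < a \<and> a < p \<and> a \<noteq> 0 \<and> -N < b \<and> b < N
            \<longrightarrow> card (sols N K a2 a1 a b) \<le> 1))
       \<and> (N < K \<and> K < 2*N - 1 \<longrightarrow> (\<forall>a b. -p < a \<and> a < p \<and> a \<noteq> 0
            \<and> -K + N - 1 < b \<and> b < K - N + 1
            \<longrightarrow> card (sols N K a2 a1 a b) \<le> 1))
       \<and> (K \<ge> 2*N - 1 \<longrightarrow> (\<forall>a b. -p < a \<and> a < p \<and> a \<noteq> 0 \<and> -K < b \<and> b < K
            \<longrightarrow> card (sols N K a2 a1 a b) \<le> 1))"
proof -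
  have card_le_1: "card (sols N K a2 a1 a b) \<le> 1"
    if "-p < a" "a < p" "a \<noteq> 0" "residue_determines N K b" for a b
  proof (rule card_sols_le_1[OF assms(1,6) _ that(4)])
    have "coprime a N"
      using assms(5) that(1-3) by (intro coprime_if_abs_less_prime_factors) auto
    moreover have "coprime 2 N"
      using assms(2) by simp
    moreover have "coprime a2 N"
      using assms(9) by (simp add: coprime_iff_gcd_eq_1)
    ultimately show "coprime (2*a*a2) N"
      by simp
  qed
  show ?thesis
  proof (intro conjI impI allI)
    fix a b
    assume "K = N" and "-p < a \<and> a < p \<and> a \<noteq> 0 \<and> -N < b \<and> b < N"
    then show "card (sols N K a2 a1 a b) \<le> 1"
      using card_le_1 residue_determines_same_modulus by blast
  next
    fix a b
    assume "N < K \<and> K < 2*N - 1"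
      and "-p < a \<and> a < p \<and> a \<noteq> 0 \<and> -K + N - 1 < b \<and> b < K - N + 1"
    then show "card (sols N K a2 a1 a b) \<le> 1"
      by (intro card_le_1 residue_determines_small) auto
  next
    fix a b
    assume "K \<ge> 2*N - 1" and "-p < a \<and> a < p \<and> a \<noteq> 0 \<and> -K < b \<and> b < K"
    then show "card (sols N K a2 a1 a b) \<le> 1"
      by (intro card_le_1 residue_determines_large_modulus) auto
  qed
qed

end
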